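(* Let $A$ be a finite set of options and let $\mathcal{L}$ be the set of all Llull matrices on $A$, viewed as a subset of a finite-dimensional real space. For $v\in\mathcal{L}$ let $T(v)\subseteq A$ be the set of path-top choices of $v$. Then $T$ is upper semicontinuous on $\mathcal{L}$: every $v\in\mathcal{L}$ has a neighbourhood $U$ such that $T(w)\subseteq T(v)$ for every $w\in U\cap\mathcal{L}$.
   Context: A Llull matrix on $A$ is a family of real numbers $v_{xy}\in[0,1]$, indexed by ordered pairs $(x,y)$ of distinct elements of $A$, with $v_{xy}+v_{yx}\le1$. Path scores: $v^*_{xy}=\max\min(v_{x_0x_1},\dots,v_{x_{m-1}x_m})$ over all paths $x_0\dots x_m$ ($m\ge1$, $x_0=x$, $x_m=y$, $x_i$ pairwise distinct). Ranking relation: $x\succeq y$ iff there is a path $x_0\dots x_m$ from $x$ to $y$ with $v^*_{x_ix_{i+1}}\ge v^*_{x_{i+1}x_i}$ for all $i<m$. An option $x$ is a path-top choice of $v$ if $x\succeq y$ for all $y\ne x$. *)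

theory Defs
  imports "HOL-Analysis.Analysis"
begin

text \<open>A Llull matrix on A is represented by a function v :: 'a => 'a => real;
  only the values v x y for distinct x, y in A are meaningful.\<close>

definition llull :: "'a set \<Rightarrow> ('a \<Rightarrow> 'a \<Rightarrow> real) \<Rightarrow> bool" where
  "llull A v \<longleftrightarrow> (\<forall>x\<in>A. \<forall>y\<in>A. x \<noteq> y \<longrightarrow>
      0 \<le> v x y \<and> v x y \<le> 1 \<and> v x y + v y x \<le> 1)"

definition is_path :: "'a set \<Rightarrow> 'a \<Rightarrow> 'a \<Rightarrow> 'a list \<Rightarrow> bool" where
  "is_path A x y xs \<longleftrightarrow> length xs \<ge> 2 \<and> distinct xs \<and> set xs \<subseteq> A
      \<and> hd xs = x \<and> last xs = y"

definition path_min :: "('a \<Rightarrow> 'a \<Rightarrow> real) \<Rightarrow> 'a list \<Rightarrow> real" where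
  "path_min v xs = Min (set (map (\<lambda>(a, b). v a b) (zip xs (tl xs))))"

definition path_score :: "'a set \<Rightarrow> ('a \<Rightarrow> 'a \<Rightarrow> real) \<Rightarrow> 'a \<Rightarrow> 'a \<Rightarrow> real" where
  "path_score A v x y = Max {path_min v xs | xs. is_path A x y xs}"

definition ranks :: "'a set \<Rightarrow> ('a \<Rightarrow> 'a \<Rightarrow> real) \<Rightarrow> 'a \<Rightarrow> 'a \<Rightarrow> bool" where
  "ranks A v x y \<longleftrightarrow> (\<exists>xs. is_path A x y xs \<and>
      (\<forall>i < length xs - 1. path_score A v (xs ! i) (xs ! Suc i)
                            \<ge> path_score A v (xs ! Suc i) (xs ! i)))"

definition path_top :: "'a set \<Rightarrow> ('a \<Rightarrow> 'a \<Rightarrow> real) \<Rightarrow> 'a set" where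
  "path_top A v = {x \<in> A. \<forall>y\<in>A. y \<noteq> x \<longrightarrow> ranks A v x y}"

end

theory Submission
  imports Defs
begin

text \<open>Path scores are maxima of minima over a finite set of paths, so they move by less than
  \<open>\<epsilon>\<close> when every entry of the matrix moves by less than \<open>\<epsilon>\<close>. Hence every strict comparison
  between the two scores of a pair survives a small enough perturbation; contrapositively, a
  step admissible for the ranking relation of the perturbed matrix is admissible for the
  original one, so paths witnessing \<open>\<succeq>\<close> transfer and path-top choices can only disappear.\<close>

definition entrywise_close :: "'a set \<Rightarrow> real \<Rightarrow> ('a \<Rightarrow> 'a \<Rightarrow> real) \<Rightarrow> ('a \<Rightarrow> 'a \<Rightarrow> real) \<Rightarrow> bool"
  where "entrywise_close A \<epsilon> w v \<longleftrightarrow> (\<forall>x\<in>A. \<forall>y\<in>A. x \<noteq> y \<longrightarrow> \<bar>w x y - v x y\<bar> < \<epsilon>)"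

lemma abs_Min_image_diff_less:
  fixes f g :: "'b \<Rightarrow> real"
  assumes "finite S" "S \<noteq> {}" "\<And>s. s \<in> S \<Longrightarrow> \<bar>f s - g s\<bar> < \<epsilon>"
  shows "\<bar>Min (f ` S) - Min (g ` S)\<bar> < \<epsilon>"
proof -
  have "Min (f ` S) \<in> f ` S"
    using assms by (intro Min_in) auto
  then obtain s0 where s0: "s0 \<in> S" "f s0 = Min (f ` S)"
    by auto
  have "Min (g ` S) \<in> g ` S"
    using assms by (intro Min_in) auto
  then obtain s1 where s1: "s1 \<in> S" "g s1 = Min (g ` S)"
    by auto
  have "Min (g ` S) \<le> g s0" "Min (f ` S) \<le> f s1"
    using assms s0 s1 by auto
  then show ?thesis using assms(3)[OF s0(1)] assms(3)[OF s1(1)] s0 s1 by auto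
qed

lemma abs_Max_image_diff_less:
  fixes f g :: "'b \<Rightarrow> real"
  assumes "finite S" "S \<noteq> {}" "\<And>s. s \<in> S \<Longrightarrow> \<bar>f s - g s\<bar> < \<epsilon>"
  shows "\<bar>Max (f ` S) - Max (g ` S)\<bar> < \<epsilon>"
proof -
  have "Max (f ` S) \<in> f ` S"
    using assms by (intro Max_in) auto
  then obtain s0 where s0: "s0 \<in> S" "f s0 = Max (f ` S)"
    by auto
  have "Max (g ` S) \<in> g ` S"
    using assms by (intro Max_in) auto
  then obtain s1 where s1: "s1 \<in> S" "g s1 = Max (g ` S)"
    by auto
  have "g s0 \<le> Max (g ` S)" "f s1 \<le> Max (f ` S)"
    using assms s0 s1 by auto
  then show ?thesis using assms(3)[OF s0(1)] assms(3)[OF s1(1)] s0 s1 by auto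
qed

lemma is_path_step:
  assumes "is_path A x y xs" "Suc i < length xs"
  shows "xs ! i \<in> A" "xs ! Suc i \<in> A" "xs ! i \<noteq> xs ! Suc i"
  using assms unfolding is_path_def by (auto simp: nth_eq_iff_index_eq dest: nth_mem)

lemma path_min_close:
  assumes "is_path A x y xs" "entrywise_close A \<epsilon> w v"
  shows "\<bar>path_min w xs - path_min v xs\<bar> < \<epsilon>"
proof -
  let ?S = "set (zip xs (tl xs))"
  have "?S \<noteq> {}"
    using assms(1) unfolding is_path_def by (cases xs; cases "tl xs") auto
  moreover have "\<bar>(\<lambda>(a, b). w a b) p - (\<lambda>(a, b). v a b) p\<bar> < \<epsilon>" if "p \<in> ?S" for p
  proof -
    obtain i where "i < length (zip xs (tl xs))" "p = zip xs (tl xs) ! i"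
      using \<open>p \<in> ?S\<close> by (auto simp: in_set_conv_nth)
    then have "Suc i < length xs" "p = (xs ! i, xs ! Suc i)"
      by (auto simp: nth_tl)
    then show ?thesis
      using is_path_step[OF assms(1)] assms(2) by (auto simp: entrywise_close_def)
  qed
  ultimately show ?thesis
    unfolding path_min_def set_map by (intro abs_Min_image_diff_less) auto
qed

lemma path_score_close:
  assumes "finite A" "x \<in> A" "y \<in> A" "x \<noteq> y" "entrywise_close A \<epsilon> w v"
  shows "\<bar>path_score A w x y - path_score A v x y\<bar> < \<epsilon>"
proof -
  let ?P = "{xs. is_path A x y xs}"
  have "finite ?P"
    using finite_subset_distinct[OF assms(1)] by (rule rev_finite_subset) (auto simp: is_path_def)
  moreover have "is_path A x y [x, y]"
    using assms by (auto simp: is_path_def)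
  then have "?P \<noteq> {}" by blast
  moreover have "\<And>u. {path_min u xs | xs. is_path A x y xs} = path_min u ` ?P"
    by auto
  ultimately show ?thesis
    unfolding path_score_def
    by (simp del: Collect_empty_eq)
       (rule abs_Max_image_diff_less; use path_min_close[OF _ assms(5)] in auto)
qed

lemma eventually_path_score_order_stable:
  assumes "finite A" "a \<in> A" "b \<in> A"
  shows "\<forall>\<^sub>F \<epsilon> in at_right 0. \<forall>w. entrywise_close A \<epsilon> w v \<longrightarrow>
           path_score A w b a \<le> path_score A w a b \<longrightarrow> path_score A v b a \<le> path_score A v a b"
proof (cases "path_score A v b a \<le> path_score A v a b")
  case False
  then have "a \<noteq> b" by auto
  let ?gap = "path_score A v b a - path_score A v a b"
  have "\<forall>\<^sub>F \<epsilon> in at_right 0. \<epsilon> < ?gap / 2"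
    unfolding eventually_at_right_field using False by (intro exI[of _ "?gap / 2"]) auto
  then show ?thesis
  proof (rule eventually_mono, intro allI impI)
    fix \<epsilon> w
    assume "\<epsilon> < ?gap / 2" "entrywise_close A \<epsilon> w v"
      and "path_score A w b a \<le> path_score A w a b"
    moreover have "\<bar>path_score A w a b - path_score A v a b\<bar> < \<epsilon>"
      "\<bar>path_score A w b a - path_score A v b a\<bar> < \<epsilon>"
      using path_score_close assms \<open>a \<noteq> b\<close> \<open>entrywise_close A \<epsilon> w v\<close> by metis+
    ultimately show "path_score A v b a \<le> path_score A v a b"
      by (auto simp: abs_less_iff)
  qed
qed simp

lemma path_score_order_stable:
  assumes "finite A"
  obtains \<epsilon> where "\<epsilon> > 0" and "\<And>w a b. entrywise_close A \<epsilon> w v \<Longrightarrow> a \<in> A \<Longrightarrow> b \<in> A \<Longrightarrow>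
      path_score A w b a \<le> path_score A w a b \<Longrightarrow> path_score A v b a \<le> path_score A v a b"
proof -
  have "\<forall>\<^sub>F \<epsilon> in at_right 0. 0 < \<epsilon> \<and> (\<forall>a\<in>A. \<forall>b\<in>A. \<forall>w. entrywise_close A \<epsilon> w v \<longrightarrow>
           path_score A w b a \<le> path_score A w a b \<longrightarrow> path_score A v b a \<le> path_score A v a b)"
    by (intro eventually_conj eventually_at_right_less eventually_ball_finite ballI assms
        eventually_path_score_order_stable)
  then obtain \<epsilon> where "0 < \<epsilon> \<and> (\<forall>a\<in>A. \<forall>b\<in>A. \<forall>w. entrywise_close A \<epsilon> w v \<longrightarrow>
           path_score A w b a \<le> path_score A w a b \<longrightarrow> path_score A v b a \<le> path_score A v a b)"
    using eventually_happens trivial_limit_at_right_real by blast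
  with that show ?thesis by blast
qed

lemma ranks_mono:
  assumes "\<And>a b. a \<in> A \<Longrightarrow> b \<in> A \<Longrightarrow> path_score A w b a \<le> path_score A w a b \<Longrightarrow>
      path_score A v b a \<le> path_score A v a b"
    and "ranks A w x y"
  shows "ranks A v x y"
proof -
  obtain xs where xs: "is_path A x y xs"
    and steps: "\<forall>i < length xs - 1. path_score A w (xs ! Suc i) (xs ! i)
                                     \<le> path_score A w (xs ! i) (xs ! Suc i)"
    using assms(2) unfolding ranks_def by blast
  have "path_score A v (xs ! Suc i) (xs ! i) \<le> path_score A v (xs ! i) (xs ! Suc i)"
    if "i < length xs - 1" for i
  proof -
    have "Suc i < length xs" using that by simp
    then show ?thesis
      using assms(1) is_path_step(1,2)[OF xs] steps that by blast
  qed
  then show ?thesis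
    unfolding ranks_def using xs by blast
qed

lemma path_top_mono:
  assumes "\<And>a b. a \<in> A \<Longrightarrow> b \<in> A \<Longrightarrow> path_score A w b a \<le> path_score A w a b \<Longrightarrow>
      path_score A v b a \<le> path_score A v a b"
  shows "path_top A w \<subseteq> path_top A v"
  unfolding path_top_def using ranks_mono[OF assms] by blast

theorem proposition2p4:
  fixes A :: "'a set" and v :: "'a \<Rightarrow> 'a \<Rightarrow> real"
  assumes "finite A" and "llull A v"
  shows "\<exists>\<epsilon>>0. \<forall>w. llull A w \<and>
           (\<forall>x\<in>A. \<forall>y\<in>A. x \<noteq> y \<longrightarrow> \<bar>w x y - v x y\<bar> < \<epsilon>)
           \<longrightarrow> path_top A w \<subseteq> path_top A v"
proof -
  obtain \<epsilon> where "\<epsilon> > 0" and stable: "\<And>w a b. entrywise_close A \<epsilon> w v \<Longrightarrow> a \<in> A \<Longrightarrow> b \<in> A \<Longrightarrow>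
      path_score A w b a \<le> path_score A w a b \<Longrightarrow>
      path_score A v b a \<le> path_score A v a b"
    using path_score_order_stable[OF assms(1)] by blast
  have "path_top A w \<subseteq> path_top A v" if "entrywise_close A \<epsilon> w v" for w
    using path_top_mono stable[OF that] by blast
  with \<open>\<epsilon> > 0\<close> show ?thesis
    unfolding entrywise_close_def by blast
qed

end
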